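(* Let $G=(V,E)$ be a forest and let $x\in\mathrm{SOL}(G)$. Then there exists a maximal independent set $S$ of $G$ with $S\subseteq\sigma(x)$.
   Context: A forest is a finite simple graph without cycles. With $A$ the adjacency matrix of $G$, $I$ the identity and $\mathbf{e}$ the all-ones vector, $\mathrm{SOL}(G)$ is the set of $x$ with $x\geq 0$, $(A+I)x\geq\mathbf{e}$ and $x^\top((A+I)x-\mathbf{e})=0$. $\sigma(x):=\{i\in V\mid x_i>0\}$. *)

theory Defs
  imports Complex_Main
begin

definition simple_graph :: "'a set \<Rightarrow> ('a \<Rightarrow> 'a \<Rightarrow> bool) \<Rightarrow> bool" where
  "simple_graph V E \<longleftrightarrow> finite V \<and> (\<forall>u v. E u v \<longrightarrow> u \<in> V \<and> v \<in> V)
     \<and> (\<forall>u v. E u v \<longrightarrow> E v u) \<and> (\<forall>v. \<not> E v v)"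

definition is_cycle :: "'a set \<Rightarrow> ('a \<Rightarrow> 'a \<Rightarrow> bool) \<Rightarrow> 'a list \<Rightarrow> bool" where
  "is_cycle V E cs \<longleftrightarrow> length cs \<ge> 3 \<and> distinct cs \<and> set cs \<subseteq> V
     \<and> (\<forall>i. Suc i < length cs \<longrightarrow> E (cs ! i) (cs ! Suc i))
     \<and> E (last cs) (hd cs)"

definition forest :: "'a set \<Rightarrow> ('a \<Rightarrow> 'a \<Rightarrow> bool) \<Rightarrow> bool" where
  "forest V E \<longleftrightarrow> simple_graph V E \<and> (\<nexists>cs. is_cycle V E cs)"

definition AIx :: "'a set \<Rightarrow> ('a \<Rightarrow> 'a \<Rightarrow> bool) \<Rightarrow> ('a \<Rightarrow> real) \<Rightarrow> 'a \<Rightarrow> real" where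
  "AIx V E x i = x i + (\<Sum>j\<in>{j\<in>V. E i j}. x j)"

text \<open>SOL(G): x \<ge> 0, (A+I)x \<ge> e, x^T((A+I)x - e) = 0; vectors are functions on V
  Only the values of x on V matter.\<close>
definition SOL :: "'a set \<Rightarrow> ('a \<Rightarrow> 'a \<Rightarrow> bool) \<Rightarrow> ('a \<Rightarrow> real) set" where
  "SOL V E = {x. (\<forall>i\<in>V. x i \<ge> 0) \<and> (\<forall>i\<in>V. AIx V E x i \<ge> 1)
      \<and> (\<Sum>i\<in>V. x i * (AIx V E x i - 1)) = 0}"

definition supp_vec :: "'a set \<Rightarrow> ('a \<Rightarrow> real) \<Rightarrow> 'a set" where
  "supp_vec V x = {i\<in>V. x i > 0}"

definition independent_set :: "'a set \<Rightarrow> ('a \<Rightarrow> 'a \<Rightarrow> bool) \<Rightarrow> 'a set \<Rightarrow> bool" where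
  "independent_set V E S \<longleftrightarrow> S \<subseteq> V \<and> (\<forall>u\<in>S. \<forall>v\<in>S. \<not> E u v)"

definition maximal_independent_set :: "'a set \<Rightarrow> ('a \<Rightarrow> 'a \<Rightarrow> bool) \<Rightarrow> 'a set \<Rightarrow> bool" where
  "maximal_independent_set V E S \<longleftrightarrow> independent_set V E S
     \<and> (\<forall>T. independent_set V E T \<and> S \<subseteq> T \<longrightarrow> T = S)"

end

theory Submission
  imports Defs
begin

text \<open>By complementary slackness every row \<open>i\<close> of \<open>(A + I) x \<ge> e\<close> with \<open>x i > 0\<close> is tight.
  In a forest this forces the support \<open>T\<close> of \<open>x\<close> to induce a graph of maximum degree at most
  one, and every vertex outside \<open>T\<close> to have either a neighbour isolated in \<open>T\<close> or two neighbours
  in \<open>T\<close>. From these two properties an independent set \<open>S \<subseteq> T\<close> dominating all vertices is built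
  greedily: a leaf of the forest yields a vertex \<open>p \<in> T\<close> whose closed neighbourhood can be
  removed without destroying the two properties; put \<open>p\<close> into \<open>S\<close> and recurse.
  An independent dominating set is a maximal independent set.\<close>

definition at_most_one_neighbour :: "('a \<Rightarrow> 'a \<Rightarrow> bool) \<Rightarrow> 'a set \<Rightarrow> 'a \<Rightarrow> bool" where
  "at_most_one_neighbour E W v \<longleftrightarrow> (\<forall>a\<in>W. \<forall>b\<in>W. E v a \<longrightarrow> E v b \<longrightarrow> a = b)"

definition isolated_in :: "('a \<Rightarrow> 'a \<Rightarrow> bool) \<Rightarrow> 'a set \<Rightarrow> 'a \<Rightarrow> bool" where
  "isolated_in E T u \<longleftrightarrow> (\<forall>w\<in>T. \<not> E u w)"

definition closed_nbhd :: "('a \<Rightarrow> 'a \<Rightarrow> bool) \<Rightarrow> 'a \<Rightarrow> 'a set" where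
  "closed_nbhd E p = insert p {v. E p v}"

definition dominates :: "('a \<Rightarrow> 'a \<Rightarrow> bool) \<Rightarrow> 'a set \<Rightarrow> 'a set \<Rightarrow> bool" where
  "dominates E S W \<longleftrightarrow> (\<forall>v\<in>W. v \<in> S \<or> (\<exists>u\<in>S. E v u))"

definition covered_by :: "('a \<Rightarrow> 'a \<Rightarrow> bool) \<Rightarrow> 'a set \<Rightarrow> 'a \<Rightarrow> bool" where
  "covered_by E T v \<longleftrightarrow> (\<exists>u\<in>T. E v u \<and> isolated_in E T u)
     \<or> (\<exists>a\<in>T. \<exists>b\<in>T. a \<noteq> b \<and> E v a \<and> E v b)"

definition is_path :: "'a set \<Rightarrow> ('a \<Rightarrow> 'a \<Rightarrow> bool) \<Rightarrow> 'a list \<Rightarrow> bool" where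
  "is_path W E xs \<longleftrightarrow> xs \<noteq> [] \<and> distinct xs \<and> set xs \<subseteq> W
     \<and> (\<forall>i. Suc i < length xs \<longrightarrow> E (xs ! i) (xs ! Suc i))"

lemma covered_by_mono:
  assumes "covered_by E T v" "T' \<subseteq> T" "\<And>c. c \<in> T \<Longrightarrow> E v c \<Longrightarrow> c \<in> T'"
  shows "covered_by E T' v"
  using assms by (auto simp: covered_by_def isolated_in_def; blast)

lemma dominates_insert_closed_nbhd:
  assumes "symp E" "dominates E S (W - closed_nbhd E p)"
  shows "dominates E (insert p S) W"
  using assms by (auto simp: dominates_def closed_nbhd_def dest: sympD)

lemma independent_set_insert:
  assumes "simple_graph V E" "independent_set V E S" "p \<in> V" "\<forall>w\<in>S. \<not> E p w"
  shows "independent_set V E (insert p S)"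
  using assms by (auto simp: independent_set_def simple_graph_def)

lemma maximal_independent_setI:
  assumes "independent_set V E S" "dominates E S V"
  shows "maximal_independent_set V E S"
  using assms unfolding maximal_independent_set_def independent_set_def dominates_def by blast

lemma longest_path_exists:
  assumes "finite W" "w \<in> W"
  obtains xs where "is_path W E xs" "\<And>ys. is_path W E ys \<Longrightarrow> length ys \<le> length xs"
proof -
  have "is_path W E [w]" using assms(2) by (simp add: is_path_def)
  moreover have "length ys < card W + 1" if "is_path W E ys" for ys
    using that assms(1) by (metis is_path_def card_mono distinct_card less_Suc_eq_le Suc_eq_plus1)
  ultimately show thesis
    using that ex_has_greatest_nat[of "is_path W E" "[w]" length "card W + 1"] by blast
qed

lemma is_path_snoc:
  assumes "is_path W E xs" "u \<in> W" "u \<notin> set xs" "E (last xs) u"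
  shows "is_path W E (xs @ [u])"
  unfolding is_path_def
proof (intro conjI allI impI)
  fix i assume i: "Suc i < length (xs @ [u])"
  show "E ((xs @ [u]) ! i) ((xs @ [u]) ! Suc i)"
  proof (cases "Suc i < length xs")
    case True thus ?thesis using assms(1) by (simp add: is_path_def nth_append)
  next
    case False
    hence "i = length xs - 1" "xs \<noteq> []" using i assms(1) by (auto simp: is_path_def)
    thus ?thesis using assms(4) by (simp add: nth_append last_conv_nth)
  qed
qed (use assms in \<open>auto simp: is_path_def\<close>)

lemma is_path_chord_cycle:
  assumes "is_path W E xs" "W \<subseteq> V" "k + 2 < length xs" "E (last xs) (xs ! k)"
  shows "is_cycle V E (drop k xs)"
  using assms by (auto simp: is_cycle_def is_path_def last_drop hd_drop_conv_nth
      dest: in_set_dropD)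

lemma forest_has_leaf:
  assumes F: "forest V E" and WV: "W \<subseteq> V" and "W \<noteq> {}"
  shows "\<exists>l\<in>W. at_most_one_neighbour E W l"
proof -
  have irrefl: "\<And>v. \<not> E v v" and "finite W"
    using F WV by (auto simp: forest_def simple_graph_def intro: finite_subset)
  obtain w where "w \<in> W" using \<open>W \<noteq> {}\<close> by blast
  then obtain xs where path: "is_path W E xs"
    and longest: "\<And>ys. is_path W E ys \<Longrightarrow> length ys \<le> length xs"
    using longest_path_exists \<open>finite W\<close> by metis
  define n where "n = length xs"
  define v where "v = last xs"
  have "xs \<noteq> []" "set xs \<subseteq> W" using path by (auto simp: is_path_def)
  hence v_nth: "v = xs ! (n - 1)" and "v \<in> W" and "n \<ge> 1"
    by (auto simp: v_def n_def last_conv_nth Suc_le_eq)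
  have "at_most_one_neighbour E W v"
    unfolding at_most_one_neighbour_def
  proof (intro ballI impI, rule ccontr)
    fix a b assume "a \<in> W" "b \<in> W" "E v a" "E v b" "a \<noteq> b"
    then obtain u where u: "u \<in> W" "E v u" "n \<ge> 2 \<longrightarrow> u \<noteq> xs ! (n - 2)"
      by (cases "n \<ge> 2 \<and> a = xs ! (n - 2)") auto
    show False
    proof (cases "u \<in> set xs")
      case False
      with path u have "is_path W E (xs @ [u])"
        by (intro is_path_snoc) (auto simp: v_def)
      thus False using longest[of "xs @ [u]"] by simp
    next
      case True
      then obtain k where k: "k < n" "xs ! k = u" by (auto simp: in_set_conv_nth n_def)
      have "k \<noteq> n - 1" using k u irrefl v_nth by metis
      moreover have "k \<noteq> n - 2" using k u \<open>k \<noteq> n - 1\<close> by (cases "n \<ge> 2") auto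
      ultimately have "k + 2 < length xs" using k by (simp add: n_def)
      hence "is_cycle V E (drop k xs)"
        using path WV u k by (intro is_path_chord_cycle) (auto simp: v_def)
      thus False using F by (auto simp: forest_def)
    qed
  qed
  thus ?thesis using \<open>v \<in> W\<close> by blast
qed

lemma isolated_closed_nbhd_separates:
  assumes "symp E" "isolated_in E T p" "v \<notin> closed_nbhd E p" "c \<in> T" "E v c"
  shows "c \<notin> closed_nbhd E p"
  using assms by (auto simp: isolated_in_def closed_nbhd_def dest: sympD)

text \<open>The vertex \<open>p\<close> is the next one put into the independent set; deleting its closed
  neighbourhood leaves every remaining vertex outside \<open>T\<close> covered.\<close>

lemma leaf_gives_separating_vertex:
  assumes symp_E: "symp E"
    and leaf: "l \<in> W" "at_most_one_neighbour E W l"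
    and TW: "T \<subseteq> W" and deg: "\<forall>i\<in>T. at_most_one_neighbour E T i"
    and cov: "\<forall>v\<in>W - T. covered_by E T v"
  shows "\<exists>p\<in>T. \<forall>v\<in>W - closed_nbhd E p. \<forall>c\<in>T. E v c \<longrightarrow> c \<notin> closed_nbhd E p"
proof (cases "l \<in> T")
  case False
  with leaf cov have "covered_by E T l" by blast
  moreover have "\<not> (\<exists>a\<in>T. \<exists>b\<in>T. a \<noteq> b \<and> E l a \<and> E l b)"
    using leaf(2) TW unfolding at_most_one_neighbour_def by blast
  ultimately obtain u where "u \<in> T" "isolated_in E T u"
    unfolding covered_by_def by blast
  thus ?thesis using isolated_closed_nbhd_separates[OF symp_E] by blast
next
  case lT: True
  show ?thesis
  proof (cases "isolated_in E T l")
    case True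
    thus ?thesis using lT isolated_closed_nbhd_separates[OF symp_E] by blast
  next
    case False
    then obtain p where p: "p \<in> T" "E l p" by (auto simp: isolated_in_def)
    have "c \<notin> closed_nbhd E p"
      if v: "v \<in> W" "v \<notin> closed_nbhd E p" and c: "c \<in> T" "E v c" for v c
    proof
      assume "c \<in> closed_nbhd E p"
      hence "E p c" using v c symp_E by (auto simp: closed_nbhd_def dest: sympD)
      hence "c = l" using deg p lT c symp_E by (auto simp: at_most_one_neighbour_def dest: sympD)
      hence "v = p" using leaf v c p TW symp_E by (auto simp: at_most_one_neighbour_def dest: sympD)
      thus False using v by (simp add: closed_nbhd_def)
    qed
    thus ?thesis using p by blast
  qed
qed

lemma covered_by_remove_closed_nbhd:
  assumes cov: "\<forall>v\<in>W - T. covered_by E T v" and "T \<subseteq> W"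
    and sep: "\<forall>v\<in>W - closed_nbhd E p. \<forall>c\<in>T. E v c \<longrightarrow> c \<notin> closed_nbhd E p"
  shows "\<forall>v\<in>(W - closed_nbhd E p) - T \<inter> (W - closed_nbhd E p).
           covered_by E (T \<inter> (W - closed_nbhd E p)) v"
proof
  fix v assume v: "v \<in> (W - closed_nbhd E p) - T \<inter> (W - closed_nbhd E p)"
  show "covered_by E (T \<inter> (W - closed_nbhd E p)) v"
  proof (rule covered_by_mono)
    show "covered_by E T v" using cov v by blast
    fix c assume "c \<in> T" "E v c"
    thus "c \<in> T \<inter> (W - closed_nbhd E p)" using sep v \<open>T \<subseteq> W\<close> by blast
  qed blast
qed

lemma forest_dominating_independent_subset:
  assumes F: "forest V E"
  shows "W \<subseteq> V \<Longrightarrow> T \<subseteq> W \<Longrightarrow> \<forall>i\<in>T. at_most_one_neighbour E T i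
    \<Longrightarrow> \<forall>v\<in>W - T. covered_by E T v
    \<Longrightarrow> \<exists>S\<subseteq>T. independent_set V E S \<and> dominates E S W"
proof (induction "card W" arbitrary: W T rule: less_induct)
  case less
  have G: "simple_graph V E" using F by (simp add: forest_def)
  hence E_sym: "symp E" and "finite W"
    using less.prems(1) by (auto simp: simple_graph_def symp_def intro: finite_subset)
  show ?case
  proof (cases "W = {}")
    case True thus ?thesis using less.prems(2)
      by (auto simp: independent_set_def dominates_def)
  next
    case False
    then obtain l where "l \<in> W" "at_most_one_neighbour E W l"
      using forest_has_leaf[OF F less.prems(1)] by blast
    then obtain p where "p \<in> T"
      and sep: "\<forall>v\<in>W - closed_nbhd E p. \<forall>c\<in>T. E v c \<longrightarrow> c \<notin> closed_nbhd E p"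
      using leaf_gives_separating_vertex[OF E_sym _ _ less.prems(2-4)] by blast
    define W' where "W' = W - closed_nbhd E p"
    have "p \<in> W" using \<open>p \<in> T\<close> less.prems(2) by blast
    hence "card W' < card W"
      using \<open>finite W\<close> by (auto simp: W'_def closed_nbhd_def intro!: psubset_card_mono)
    moreover have "W' \<subseteq> V" "T \<inter> W' \<subseteq> W'" using less.prems(1) by (auto simp: W'_def)
    moreover have "\<forall>i\<in>T \<inter> W'. at_most_one_neighbour E (T \<inter> W') i"
      using less.prems(3) by (auto simp: at_most_one_neighbour_def)
    moreover have "\<forall>v\<in>W' - T \<inter> W'. covered_by E (T \<inter> W') v"
      using covered_by_remove_closed_nbhd[OF less.prems(4,2) sep] by (simp add: W'_def)
    ultimately have "\<exists>S\<subseteq>T \<inter> W'. independent_set V E S \<and> dominates E S W'"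
      by (rule less.hyps)
    then obtain S where S: "S \<subseteq> T \<inter> W'" "independent_set V E S" "dominates E S W'"
      by blast
    have "independent_set V E (insert p S)"
      using S \<open>p \<in> W\<close> less.prems(1) by (intro independent_set_insert[OF G]) (auto simp: W'_def closed_nbhd_def)
    moreover have "dominates E (insert p S) W"
      using S(3) unfolding W'_def by (rule dominates_insert_closed_nbhd[OF E_sym])
    ultimately show ?thesis using S(1) \<open>p \<in> T\<close> by blast
  qed
qed

locale SOL_point =
  fixes V :: "'a set" and E :: "'a \<Rightarrow> 'a \<Rightarrow> bool" and x :: "'a \<Rightarrow> real"
  assumes graph: "simple_graph V E" and sol: "x \<in> SOL V E"
begin

abbreviation "T \<equiv> supp_vec V x"

definition supp_nbrs :: "'a \<Rightarrow> 'a set" where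
  "supp_nbrs i = {j\<in>T. E i j}"

lemma finite_V: "finite V"
  using graph by (simp add: simple_graph_def)

lemma adj_sym: "E u v \<Longrightarrow> E v u"
  using graph by (simp add: simple_graph_def)

lemma nonneg: "i \<in> V \<Longrightarrow> 0 \<le> x i"
  using sol by (simp add: SOL_def)

lemma AIx_ge_1: "i \<in> V \<Longrightarrow> 1 \<le> AIx V E x i"
  using sol by (simp add: SOL_def)

lemma AIx_eq_1_on_supp:
  assumes "i \<in> T"
  shows "AIx V E x i = 1"
proof -
  have "\<forall>j\<in>V. x j * (AIx V E x j - 1) = 0"
    using sol finite_V nonneg AIx_ge_1 by (subst sum_nonneg_eq_0_iff[symmetric]) (auto simp: SOL_def)
  thus ?thesis using assms by (auto simp: supp_vec_def)
qed

lemma AIx_supp_nbrs: "AIx V E x i = x i + sum x (supp_nbrs i)"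
proof -
  have "sum x {j\<in>V. E i j} = sum x (supp_nbrs i)"
    using finite_V nonneg
    by (intro sum.mono_neutral_right) (force simp: supp_nbrs_def supp_vec_def)+
  thus ?thesis by (simp add: AIx_def)
qed

lemma sum_supp_nbrs_ge:
  assumes "A \<subseteq> supp_nbrs i"
  shows "sum x A \<le> sum x (supp_nbrs i)"
  using assms finite_V by (intro sum_mono2) (auto simp: supp_nbrs_def supp_vec_def)

text \<open>Let \<open>D\<close> be the support vertices with two support neighbours and \<open>l\<close> a leaf of \<open>D\<close>.
  Some support neighbour \<open>j\<close> of \<open>l\<close> lies outside \<open>D\<close>, so the tight row of \<open>j\<close> reads
  \<open>x j + x l = 1\<close>, while the tight row of \<open>l\<close> contains \<open>x l + x j\<close> plus a further positive entry.\<close>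

lemma supp_degree_le_one:
  assumes F: "forest V E" and "i \<in> T"
  shows "at_most_one_neighbour E T i"
proof (rule ccontr)
  define D where "D = {i\<in>T. \<not> at_most_one_neighbour E T i}"
  assume "\<not> ?thesis"
  hence "D \<noteq> {}" using assms(2) by (auto simp: D_def)
  moreover have "D \<subseteq> V" by (auto simp: D_def supp_vec_def)
  ultimately obtain l where "l \<in> D" and leaf: "at_most_one_neighbour E D l"
    using forest_has_leaf[OF F] by blast
  hence "\<not> at_most_one_neighbour E T l" by (simp add: D_def)
  then obtain a b where ab: "a \<in> T" "b \<in> T" "E l a" "E l b" "a \<noteq> b"
    unfolding at_most_one_neighbour_def by blast
  have "a \<notin> D \<or> b \<notin> D"
    using leaf ab unfolding at_most_one_neighbour_def by blast
  then obtain j k where jk: "j \<in> T" "k \<in> T" "E l j" "E l k" "j \<noteq> k" "j \<notin> D"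
  proof
    assume "a \<notin> D" thus thesis using that[of a b] ab by blast
  next
    assume "b \<notin> D" thus thesis using that[of b a] ab by blast
  qed
  have "l \<in> T" using \<open>l \<in> D\<close> by (simp add: D_def)
  have "at_most_one_neighbour E T j" using jk(1,6) by (simp add: D_def)
  moreover have "l \<in> supp_nbrs j" using jk(3) \<open>l \<in> T\<close> adj_sym by (simp add: supp_nbrs_def)
  ultimately have "supp_nbrs j = {l}" by (auto simp: supp_nbrs_def at_most_one_neighbour_def)
  hence "x j + x l = 1" using AIx_eq_1_on_supp[OF jk(1)] by (simp add: AIx_supp_nbrs)
  moreover have "x j + x k \<le> sum x (supp_nbrs l)"
    using sum_supp_nbrs_ge[of "{j, k}" l] jk by (simp add: supp_nbrs_def)
  moreover have "x k > 0" using jk(2) by (simp add: supp_vec_def)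
  ultimately show False
    using AIx_eq_1_on_supp[OF \<open>l \<in> T\<close>] by (simp add: AIx_supp_nbrs)
qed

lemma covered_outside_supp:
  assumes "v \<in> V - T"
  shows "covered_by E T v"
proof (cases "\<exists>a\<in>T. \<exists>b\<in>T. a \<noteq> b \<and> E v a \<and> E v b")
  case True thus ?thesis by (simp add: covered_by_def)
next
  case False
  have "x v = 0" using assms nonneg by (force simp: supp_vec_def)
  hence one: "1 \<le> sum x (supp_nbrs v)" using AIx_ge_1[of v] assms by (simp add: AIx_supp_nbrs)
  hence "supp_nbrs v \<noteq> {}" by auto
  then obtain u where "u \<in> supp_nbrs v" by blast
  with False have "supp_nbrs v = {u}" by (auto simp: supp_nbrs_def)
  hence "1 \<le> x u" using one by simp
  have uT: "u \<in> T" "E v u" using \<open>u \<in> supp_nbrs v\<close> by (auto simp: supp_nbrs_def)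
  have "isolated_in E T u"
    unfolding isolated_in_def
  proof (intro ballI notI)
    fix w assume "w \<in> T" "E u w"
    hence "x w \<le> sum x (supp_nbrs u)" using sum_supp_nbrs_ge[of "{w}" u] by (simp add: supp_nbrs_def)
    moreover have "x w > 0" using \<open>w \<in> T\<close> by (simp add: supp_vec_def)
    ultimately show False
      using AIx_eq_1_on_supp[OF uT(1)] \<open>1 \<le> x u\<close> by (simp add: AIx_supp_nbrs)
  qed
  thus ?thesis using uT by (auto simp: covered_by_def)
qed

end

theorem lemma6:
  fixes V :: "'a set" and E :: "'a \<Rightarrow> 'a \<Rightarrow> bool" and x :: "'a \<Rightarrow> real"
  assumes "forest V E"
    and "x \<in> SOL V E"
  shows "\<exists>S. maximal_independent_set V E S \<and> S \<subseteq> supp_vec V x"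
proof -
  interpret SOL_point V E x
    using assms by unfold_locales (simp_all add: forest_def)
  have "\<exists>S\<subseteq>T. independent_set V E S \<and> dominates E S V"
    using assms(1) supp_degree_le_one[OF assms(1)] covered_outside_supp
    by (intro forest_dominating_independent_subset) (auto simp: supp_vec_def)
  thus ?thesis using maximal_independent_setI by blast
qed

end
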